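(* In the curved-exam game described in the context, let $\hat\alpha_n:=n\big(1-(\sum_{i=1}^n\frac1{n-\alpha_i})^{-1}\big)$, $\bar x^*:=1-\frac{nm}{n-1}\big(\frac1{\hat\alpha_n}-1\big)$, and $x_i^*:=\frac{(n-1)\alpha_i-n(1-\alpha_i)(m-\bar x^* )}{n-\alpha_i}$ for $i=1,\dots,n$. Then the profile $x^*=(x_1^*,\dots,x_n^* )$ is a curved interior pure Nash equilibrium (all $x_i^*>0$) if and only if $$\max_{1\le i\le n}\Big\{(n-\alpha_i)\Big(\frac{nm}{n-1}-J_i\Big)-\alpha_i\Big\}\ \le\ n(m-\bar x^* )\ <\ \frac{(n-1)\alpha_{(1)}}{1-\alpha_{(1)}},$$ where $\alpha_{(1)}:=\min_{1\le i\le n}\alpha_i$.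
   Context: The curved-exam game: fix $n\ge2$, abilities $\alpha_1,\dots,\alpha_n\in(0,1)$, target mean $m\in(0,1)$. Student $i$ chooses $x_i\in[0,1]$; $\bar x=\frac1n\sum_j x_j$, $\bar x_{-i}=\frac1{n-1}\sum_{j\ne i}x_j$. Grade $G_i(x)=x_i+\max(m-\bar x,0)$ (not truncated at 1); payoff $U_i(x)=G_i(x)^{\alpha_i}(1-x_i)^{1-\alpha_i}$. For each $i$, $J_i$ denotes the unique zero in $\big[\frac{nm-\alpha_i}{n-1},\frac{nm}{n-1}-\frac{\alpha_i}{n-\alpha_i}\big]$ of the strictly decreasing function $\phi_i(z)=\big(m+\frac{n-1}{n}(1-z)\big)^{\alpha_i}\big(1+\frac{nm}{n-1}-z\big)^{1-\alpha_i}-1$. *)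

theory Defs
  imports Complex_Main
begin

text \<open>Curved-exam game with n students indexed by 0,...,n-1.
  A profile is a function x :: nat => real, only its values on {..<n} matter.\<close>

definition avg :: "nat \<Rightarrow> (nat \<Rightarrow> real) \<Rightarrow> real" where
  "avg n x = (\<Sum>j<n. x j) / real n"

definition grade :: "nat \<Rightarrow> real \<Rightarrow> (nat \<Rightarrow> real) \<Rightarrow> nat \<Rightarrow> real" where
  "grade n m x i = x i + max (m - avg n x) 0"

definition payoff :: "nat \<Rightarrow> (nat \<Rightarrow> real) \<Rightarrow> real \<Rightarrow> (nat \<Rightarrow> real) \<Rightarrow> nat \<Rightarrow> real" where
  "payoff n \<alpha> m x i = grade n m x i powr \<alpha> i * (1 - x i) powr (1 - \<alpha> i)"

definition pure_NE :: "nat \<Rightarrow> (nat \<Rightarrow> real) \<Rightarrow> real \<Rightarrow> (nat \<Rightarrow> real) \<Rightarrow> bool" where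
  "pure_NE n \<alpha> m x \<longleftrightarrow>
     (\<forall>i<n. 0 \<le> x i \<and> x i \<le> 1) \<and>
     (\<forall>i<n. \<forall>y. 0 \<le> y \<longrightarrow> y \<le> 1 \<longrightarrow> payoff n \<alpha> m (x(i := y)) i \<le> payoff n \<alpha> m x i)"

definition curved_interior_NE :: "nat \<Rightarrow> (nat \<Rightarrow> real) \<Rightarrow> real \<Rightarrow> (nat \<Rightarrow> real) \<Rightarrow> bool" where
  "curved_interior_NE n \<alpha> m x \<longleftrightarrow>
     pure_NE n \<alpha> m x \<and> avg n x < m \<and> (\<forall>i<n. 0 < x i)"

definition phi :: "nat \<Rightarrow> real \<Rightarrow> real \<Rightarrow> real \<Rightarrow> real" where
  "phi n m a z = (m + (real n - 1) / real n * (1 - z)) powr a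
                 * (1 + real n * m / (real n - 1) - z) powr (1 - a) - 1"

definition J :: "nat \<Rightarrow> real \<Rightarrow> real \<Rightarrow> real" where
  "J n m a = (THE z. (real n * m - a) / (real n - 1) \<le> z
                   \<and> z \<le> real n * m / (real n - 1) - a / (real n - a)
                   \<and> phi n m a z = 0)"

definition alpha_hat :: "nat \<Rightarrow> (nat \<Rightarrow> real) \<Rightarrow> real" where
  "alpha_hat n \<alpha> = real n * (1 - 1 / (\<Sum>i<n. 1 / (real n - \<alpha> i)))"

definition xbar_star :: "nat \<Rightarrow> (nat \<Rightarrow> real) \<Rightarrow> real \<Rightarrow> real" where
  "xbar_star n \<alpha> m = 1 - real n * m / (real n - 1) * (1 / alpha_hat n \<alpha> - 1)"

definition x_star :: "nat \<Rightarrow> (nat \<Rightarrow> real) \<Rightarrow> real \<Rightarrow> nat \<Rightarrow> real" where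
  "x_star n \<alpha> m i = ((real n - 1) * \<alpha> i - real n * (1 - \<alpha> i) * (m - xbar_star n \<alpha> m))
                     / (real n - \<alpha> i)"

end

theory Submission
  imports Defs "HOL-Analysis.Convex"
begin

(* The two bases of phi are proportional, m + (n-1)/n (1 - z) = (n-1)/n (1 + nm/(n-1) - z),
   so phi is affine where it is defined and J has the closed form
   1 + nm/(n-1) - (n/(n-1))^a; the interval in the definition of J reduces to Bernoulli's
   inequality for real exponents, and its strict form makes every threshold of the theorem
   positive.

   Fix the mean z of the other students. On the curved branch the grade G and the leisure
   1 - y of a student satisfy n/(n-1) G + (1 - y) = 1 + nm/(n-1) - z, a linear budget, so by
   weighted AM-GM the Cobb-Douglas payoff is maximised at its stationary point; off the curve
   it is at most a^a (1-a)^(1-a), which is attained at y = a. The profile x* is built so that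
   every x_i* is that stationary point and its mean is x_bar*. Hence x_i* is a best reply iff
   the stationary value beats a^a (1-a)^(1-a), i.e. iff phi >= 0, i.e. iff the others' mean is
   at most J_i, which unwinds to the lower bound; the upper bound says that x_i* > 0 for the
   least able student. *)

lemma Youngs_inequality_0_strict:
  fixes a u v :: real
  assumes "0 < a" "a < 1" "0 < u" "0 < v" "u \<noteq> v"
  shows "u powr a * v powr (1 - a) < a * u + (1 - a) * v"
proof -
  define A where "A = a * u + (1 - a) * v"
  have A: "0 < A"
    using assms unfolding A_def by (simp add: add_pos_pos)
  have "u - A = (1 - a) * (u - v)" "v - A = a * (v - u)"
    unfolding A_def by algebra+
  then have "u \<noteq> A" "v \<noteq> A"
    using assms by auto
  then have "a * (ln u - ln A) + (1 - a) * (ln v - ln A) < a * ((u - A) / A) + (1 - a) * ((v - A) / A)"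
    using assms A by (intro add_strict_mono mult_strict_left_mono ln_diff_less) auto
  also have "\<dots> = 0"
    using A unfolding A_def by (simp add: field_simps)
  finally have "a * ln u + (1 - a) * ln v < ln A"
    by (simp add: algebra_simps)
  then have "exp (a * ln u + (1 - a) * ln v) < A"
    using A by (metis exp_less_cancel_iff exp_ln)
  then show ?thesis
    using assms by (simp add: powr_def exp_add A_def)
qed

lemma powr_less_Bernoulli:
  fixes a x :: real
  assumes "0 < a" "a < 1" "-1 < x" "x \<noteq> 0"
  shows "(1 + x) powr a < 1 + a * x"
  using Youngs_inequality_0_strict[of a "1 + x" 1] assms by (simp add: algebra_simps)

lemma cobb_douglas_homogeneous:
  fixes p q t a :: real
  assumes "0 < t"
  shows "(p * t) powr a * (q * t) powr (1 - a) = p powr a * q powr (1 - a) * t"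
proof -
  have "t powr a * t powr (1 - a) = t"
    using assms by (simp flip: powr_add)
  then show ?thesis
    using assms by (simp add: powr_mult mult_ac)
qed

lemma cobb_douglas_optimum_value:
  fixes a s t :: real
  assumes "0 < t"
  shows "(a * (s * t)) powr a * ((1 - a) * t) powr (1 - a) = a powr a * (1 - a) powr (1 - a) * (s powr a * t)"
proof -
  have "(a * s * t) powr a * ((1 - a) * t) powr (1 - a) = (a * s) powr a * (1 - a) powr (1 - a) * t"
    by (rule cobb_douglas_homogeneous[OF assms])
  then show ?thesis
    by (simp only: powr_mult mult_ac)
qed

lemma cobb_douglas_le:
  fixes a p q P Q :: real
  assumes "0 < a" "a < 1" "0 \<le> p" "0 \<le> q" "0 < P" "0 < Q" "p / P + q / Q \<le> 1"
  shows "p powr a * q powr (1 - a) \<le> (a * P) powr a * ((1 - a) * Q) powr (1 - a)"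
proof (cases "p = 0 \<or> q = 0")
  case True
  then show ?thesis
    using assms by auto
next
  case False
  define u v where "u = p / (a * P)" and "v = q / ((1 - a) * Q)"
  have uv: "0 < u" "0 < v"
    using False assms unfolding u_def v_def by auto
  have "u powr a * v powr (1 - a) \<le> a * u + (1 - a) * v"
    using Youngs_inequality_0[of a "1 - a" u v] assms uv by simp
  also have "\<dots> = p / P + q / Q"
    using assms unfolding u_def v_def by (simp add: field_simps)
  finally have "u powr a * v powr (1 - a) \<le> 1"
    using assms by simp
  moreover have "p powr a * q powr (1 - a) = (a * P) powr a * ((1 - a) * Q) powr (1 - a) * (u powr a * v powr (1 - a))"
    using assms uv unfolding u_def v_def by (simp add: powr_mult powr_divide)
  ultimately show ?thesis
    using assms by (simp add: mult_left_le)
qed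

lemma n_ratio_powr_bounds:
  fixes a :: real
  assumes "2 \<le> n" "0 < a" "a < 1"
  shows "real n / (real n - a) < (real n / (real n - 1)) powr a"
    and "(real n / (real n - 1)) powr a \<le> 1 + a / (real n - 1)"
proof -
  have N: "2 \<le> real n"
    using assms by simp
  have "((real n - 1) / real n) powr a < (real n - a) / real n"
    using powr_less_Bernoulli[of a "- 1 / real n"] assms N by (simp add: diff_divide_distrib)
  then show "real n / (real n - a) < (real n / (real n - 1)) powr a"
    using assms N by (simp add: powr_divide divide_simps mult.commute)
  have x: "0 < 1 / (real n - 1)"
    using N by simp
  have "(1 + 1 / (real n - 1)) powr a < 1 + a * (1 / (real n - 1))"
    by (rule powr_less_Bernoulli) (use assms x in \<open>linarith | simp\<close>)+
  moreover have "1 + 1 / (real n - 1) = real n / (real n - 1)"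
    using N by (simp add: field_simps)
  ultimately show "(real n / (real n - 1)) powr a \<le> 1 + a / (real n - 1)"
    by simp
qed

(* On the curved branch, n/(n-1) times the grade plus the leisure 1 - y equals this budget,
   whatever y is (curved_grade_eq). *)
definition budget :: "nat \<Rightarrow> real \<Rightarrow> real \<Rightarrow> real" where
  "budget n m z = 1 + real n * m / (real n - 1) - z"

lemma phi_eq_affine:
  assumes "2 \<le> n" "0 < budget n m z"
  shows "phi n m a z = ((real n - 1) / real n) powr a * budget n m z - 1"
proof -
  have "m + (real n - 1) / real n * (1 - z) = (real n - 1) / real n * budget n m z"
    using assms(1) unfolding budget_def by (simp add: field_simps)
  then show ?thesis
    using cobb_douglas_homogeneous[where p = "(real n - 1) / real n" and q = 1 and t = "budget n m z"] assms
    unfolding phi_def budget_def[symmetric] by simp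
qed

lemma J_eq:
  assumes "2 \<le> n" "0 < a" "a < 1"
  shows "J n m a = 1 + real n * m / (real n - 1) - (real n / (real n - 1)) powr a"
proof -
  have N: "2 \<le> real n"
    using assms by simp
  define R where "R = (real n / (real n - 1)) powr a"
  define z0 where "z0 = 1 + real n * m / (real n - 1) - R"
  have budget_z0: "budget n m z0 = R"
    unfolding budget_def z0_def by simp
  have R_pos: "0 < R"
    using N unfolding R_def by simp
  have cR: "((real n - 1) / real n) powr a * R = 1"
    using N unfolding R_def by (simp flip: powr_mult)
  have "z0 - (real n * m - a) / (real n - 1) = 1 + a / (real n - 1) - R"
    unfolding z0_def by (simp add: diff_divide_distrib)
  then have lo: "(real n * m - a) / (real n - 1) \<le> z0"
    using n_ratio_powr_bounds(2)[OF assms] unfolding R_def by simp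
  have "1 + a / (real n - a) = real n / (real n - a)"
    using assms N by (simp add: field_simps)
  then have hi: "z0 \<le> real n * m / (real n - 1) - a / (real n - a)"
    using n_ratio_powr_bounds(1)[OF assms] unfolding z0_def R_def by simp
  have phi_z0: "phi n m a z0 = 0"
    using phi_eq_affine[OF assms(1)] budget_z0 R_pos cR by simp
  show ?thesis
    unfolding J_def
  proof (rule the_equality)
    fix w
    assume w: "(real n * m - a) / (real n - 1) \<le> w \<and> w \<le> real n * m / (real n - 1) - a / (real n - a)
      \<and> phi n m a w = 0"
    have "0 < a / (real n - a)"
      using assms N by simp
    then have "0 < budget n m w"
      using w unfolding budget_def by linarith
    then have "((real n - 1) / real n) powr a * budget n m w = 1"
      using phi_eq_affine[OF assms(1)] w by simp
    then have "budget n m w = R"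
      by (metis cR mult.left_commute mult_1_right)
    then show "w = 1 + real n * m / (real n - 1) - (real n / (real n - 1)) powr a"
      unfolding budget_def R_def by simp
  qed (use lo hi phi_z0 in \<open>simp add: z0_def R_def\<close>)
qed

lemma le_J_iff:
  assumes "2 \<le> n" "0 < a" "a < 1"
  shows "z \<le> J n m a \<longleftrightarrow> 1 \<le> ((real n - 1) / real n) powr a * budget n m z"
proof -
  define c where "c = ((real n - 1) / real n) powr a"
  have c: "0 < c" "c * (real n / (real n - 1)) powr a = 1"
    using assms unfolding c_def by (simp_all flip: powr_mult)
  have "z \<le> J n m a \<longleftrightarrow> (real n / (real n - 1)) powr a \<le> budget n m z"
    unfolding J_eq[OF assms] budget_def by linarith
  also have "\<dots> \<longleftrightarrow> 1 \<le> c * budget n m z"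
    using c mult_le_cancel_left_pos[of c "(real n / (real n - 1)) powr a" "budget n m z"] by simp
  finally show ?thesis
    unfolding c_def .
qed

lemma J_threshold_pos:
  assumes "2 \<le> n" "0 < a" "a < 1"
  shows "0 < (real n - a) * (real n * m / (real n - 1) - J n m a) - a"
proof -
  have N: "2 \<le> real n"
    using assms by simp
  define R where "R = (real n / (real n - 1)) powr a"
  have "real n < (real n - a) * R"
    using n_ratio_powr_bounds(1)[OF assms] assms N unfolding R_def by (simp add: divide_less_eq mult.commute)
  moreover have "real n * m / (real n - 1) - J n m a = R - 1"
    using J_eq[OF assms, of m] unfolding R_def by simp
  ultimately show ?thesis
    by (simp only:) (simp add: algebra_simps)
qed

lemma sum_fun_upd:
  fixes f :: "'a \<Rightarrow> 'b::ab_group_add"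
  assumes "finite A" "i \<in> A"
  shows "sum (f(i := y)) A = sum f A - f i + y"
proof -
  have "sum (f(i := y)) (A - {i}) = sum f (A - {i})"
    by (rule sum.cong) auto
  then show ?thesis
    using assms by (simp add: sum.remove)
qed

definition others_mean :: "nat \<Rightarrow> (nat \<Rightarrow> real) \<Rightarrow> nat \<Rightarrow> real" where
  "others_mean n x i = ((\<Sum>j<n. x j) - x i) / (real n - 1)"

lemma others_mean_mult:
  assumes "2 \<le> n"
  shows "(real n - 1) * others_mean n x i = (\<Sum>j<n. x j) - x i"
  using assms unfolding others_mean_def by simp

(* The payoff U_i as a function of x_i = y and of the mean z of the other students. *)
definition reply_payoff :: "nat \<Rightarrow> real \<Rightarrow> real \<Rightarrow> real \<Rightarrow> real \<Rightarrow> real" where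
  "reply_payoff n m a z y =
     (y + max (m - ((real n - 1) * z + y) / real n) 0) powr a * (1 - y) powr (1 - a)"

lemma payoff_fun_upd:
  assumes "2 \<le> n" "i < n"
  shows "payoff n \<alpha> m (x(i := y)) i = reply_payoff n m (\<alpha> i) (others_mean n x i) y"
proof -
  have "(\<Sum>j<n. (x(i := y)) j) = (\<Sum>j<n. x j) - x i + y"
    using assms by (intro sum_fun_upd) auto
  then have "avg n (x(i := y)) = ((real n - 1) * others_mean n x i + y) / real n"
    unfolding avg_def others_mean_mult[OF assms(1)] by simp
  then show ?thesis
    unfolding payoff_def grade_def reply_payoff_def by simp
qed

lemma curved_grade_eq:
  assumes "2 \<le> n"
  shows "real n * (y + (m - ((real n - 1) * z + y) / real n)) = (real n - 1) * (budget n m z - (1 - y))"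
  using assms unfolding budget_def by (simp add: field_simps)

lemma reply_payoff_le:
  assumes n: "2 \<le> n" and a: "0 < a" "a < 1" and B: "0 < budget n m z" and y: "0 \<le> y" "y \<le> 1"
  shows "reply_payoff n m a z y
    \<le> a powr a * (1 - a) powr (1 - a) * max 1 (((real n - 1) / real n) powr a * budget n m z)"
proof (cases "((real n - 1) * z + y) / real n \<le> m")
  case True
  define G where "G = y + (m - ((real n - 1) * z + y) / real n)"
  have N: "2 \<le> real n"
    using n by simp
  have "G / ((real n - 1) / real n * budget n m z) = (real n * G) / ((real n - 1) * budget n m z)"
    by simp
  also have "\<dots> = (budget n m z - (1 - y)) / budget n m z"
    using curved_grade_eq[OF n, of y m z] N unfolding G_def[symmetric] by simp
  finally have "G / ((real n - 1) / real n * budget n m z) + (1 - y) / budget n m z = 1"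
    using B by (simp add: diff_divide_distrib)
  then have "G powr a * (1 - y) powr (1 - a)
      \<le> (a * ((real n - 1) / real n * budget n m z)) powr a * ((1 - a) * budget n m z) powr (1 - a)"
    using True y a N B by (intro cobb_douglas_le) (auto simp: G_def)
  also have "\<dots> = a powr a * (1 - a) powr (1 - a) * (((real n - 1) / real n) powr a * budget n m z)"
    by (rule cobb_douglas_optimum_value[OF B])
  finally have "reply_payoff n m a z y
      \<le> a powr a * (1 - a) powr (1 - a) * (((real n - 1) / real n) powr a * budget n m z)"
    using True unfolding reply_payoff_def G_def by simp
  also have "\<dots> \<le> a powr a * (1 - a) powr (1 - a) * max 1 (((real n - 1) / real n) powr a * budget n m z)"
    by (intro mult_left_mono) auto
  finally show ?thesis .
next
  case False
  have "y powr a * (1 - y) powr (1 - a) \<le> a powr a * (1 - a) powr (1 - a) * 1"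
    using cobb_douglas_le[of a y "1 - y" 1 1] y a by simp
  also have "\<dots> \<le> a powr a * (1 - a) powr (1 - a) * max 1 (((real n - 1) / real n) powr a * budget n m z)"
    by (intro mult_left_mono) auto
  finally show ?thesis
    using False unfolding reply_payoff_def by simp
qed

lemma reply_payoff_stationary:
  assumes n: "2 \<le> n" and B: "0 < budget n m z"
    and x: "1 - x = (1 - a) * budget n m z" and curved: "((real n - 1) * z + x) / real n \<le> m"
  shows "reply_payoff n m a z x
    = a powr a * (1 - a) powr (1 - a) * (((real n - 1) / real n) powr a * budget n m z)"
proof -
  have N: "2 \<le> real n"
    using n by simp
  have "real n * (x + (m - ((real n - 1) * z + x) / real n)) = (real n - 1) * (a * budget n m z)"
    unfolding curved_grade_eq[OF n] x by (simp add: algebra_simps)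
  also have "\<dots> = real n * (a * ((real n - 1) / real n * budget n m z))"
    using N by simp
  finally have "x + (m - ((real n - 1) * z + x) / real n) = a * ((real n - 1) / real n * budget n m z)"
    using N by (subst (asm) mult_left_cancel) auto
  then have "reply_payoff n m a z x
      = (a * ((real n - 1) / real n * budget n m z)) powr a * ((1 - a) * budget n m z) powr (1 - a)"
    unfolding reply_payoff_def x using curved by simp
  also have "\<dots> = a powr a * (1 - a) powr (1 - a) * (((real n - 1) / real n) powr a * budget n m z)"
    by (rule cobb_douglas_optimum_value[OF B])
  finally show ?thesis .
qed

lemma best_reply_iff:
  assumes n: "2 \<le> n" and a: "0 < a" "a < 1" and B: "0 < budget n m z"
    and x: "1 - x = (1 - a) * budget n m z" and curved: "((real n - 1) * z + x) / real n \<le> m"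
  shows "(\<forall>y. 0 \<le> y \<longrightarrow> y \<le> 1 \<longrightarrow> reply_payoff n m a z y \<le> reply_payoff n m a z x)
    \<longleftrightarrow> z \<le> J n m a"
proof -
  define K where "K = a powr a * (1 - a) powr (1 - a)"
  define W where "W = ((real n - 1) / real n) powr a * budget n m z"
  have K: "0 < K"
    using a unfolding K_def by simp
  have U_x: "reply_payoff n m a z x = K * W"
    using reply_payoff_stationary[OF n B x curved] unfolding K_def W_def .
  have U_a: "K \<le> reply_payoff n m a z a"
    unfolding reply_payoff_def K_def using a by (intro mult_right_mono powr_mono2) auto
  show ?thesis
    unfolding le_J_iff[OF n a] W_def[symmetric]
  proof
    assume "\<forall>y. 0 \<le> y \<longrightarrow> y \<le> 1 \<longrightarrow> reply_payoff n m a z y \<le> reply_payoff n m a z x"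
    then have "reply_payoff n m a z a \<le> K * W"
      using a U_x by simp
    then have "K * 1 \<le> K * W"
      using U_a by simp
    then show "1 \<le> W"
      using K by simp
  next
    assume "1 \<le> W"
    then show "\<forall>y. 0 \<le> y \<longrightarrow> y \<le> 1 \<longrightarrow> reply_payoff n m a z y \<le> reply_payoff n m a z x"
      using reply_payoff_le[OF n a B] U_x unfolding K_def W_def by simp
  qed
qed

context
  fixes n :: nat and \<alpha> :: "nat \<Rightarrow> real" and m :: real
  assumes n: "2 \<le> n" and \<alpha>: "\<forall>i<n. 0 < \<alpha> i \<and> \<alpha> i < 1"
begin

lemma x_star_eq:
  assumes "i < n"
  shows "x_star n \<alpha> m i = 1 - (1 - \<alpha> i) * (real n * (1 + m - xbar_star n \<alpha> m) / (real n - \<alpha> i))"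
proof -
  have "0 < real n - \<alpha> i"
    using n \<alpha> assms by force
  then show ?thesis
    unfolding x_star_def by (simp add: field_simps)
qed

lemma avg_x_star: "avg n (x_star n \<alpha> m) = xbar_star n \<alpha> m"
proof -
  define H where "H = (\<Sum>i<n. 1 / (real n - \<alpha> i))"
  define D where "D = 1 + m - xbar_star n \<alpha> m"
  have N: "2 \<le> real n"
    using n by simp
  have \<alpha>_less: "0 < real n - \<alpha> i" if "i < n" for i
    using n \<alpha> that by force
  have "(\<Sum>i<n. 1 / real n) < H"
    unfolding H_def
  proof (rule sum_strict_mono)
    fix i
    assume "i \<in> {..<n}"
    then show "1 / real n < 1 / (real n - \<alpha> i)"
      using \<alpha> \<alpha>_less by (intro divide_strict_left_mono) auto
  qed (use n in \<open>auto simp: lessThan_empty_iff\<close>)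
  then have H: "1 < H"
    using N by simp
  have nz: "real n \<noteq> 0" "real n - 1 \<noteq> 0" "H \<noteq> 0" "H - 1 \<noteq> 0"
    using H N by auto
  have "1 / alpha_hat n \<alpha> - 1 = (H - real n * (H - 1)) / (real n * (H - 1))"
    using nz unfolding alpha_hat_def H_def[symmetric] by (simp add: field_simps)
  define Q where "Q = (real n - 1) * (H - 1)"
  have Q: "Q \<noteq> 0"
    using nz unfolding Q_def by simp
  have "D = m + m * (H - real n * (H - 1)) / Q"
    using \<open>1 / alpha_hat n \<alpha> - 1 = _\<close> nz unfolding D_def xbar_star_def Q_def by simp
  then have "D * Q = m * Q + m * (H - real n * (H - 1))"
    using Q by (simp add: distrib_right)
  also have "\<dots> = m"
    unfolding Q_def by (simp add: algebra_simps)
  finally have key: "D * (real n - 1) * (H - 1) = m"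
    unfolding Q_def by (simp add: mult.assoc)
  have "x_star n \<alpha> m i = 1 - real n * D + real n * (real n - 1) * D * (1 / (real n - \<alpha> i))" if "i < n" for i
    using x_star_eq[OF that] \<alpha>_less[OF that] unfolding D_def by (simp add: field_simps)
  then have "(\<Sum>i<n. x_star n \<alpha> m i) = real n * (1 - real n * D) + real n * (real n - 1) * D * H"
    unfolding H_def by (simp add: sum.distrib sum_distrib_left)
  also have "\<dots> = real n * (1 - D + D * (real n - 1) * (H - 1))"
    by (simp add: algebra_simps)
  also have "\<dots> = real n * xbar_star n \<alpha> m"
    by (simp only: key) (simp add: D_def)
  finally show ?thesis
    unfolding avg_def using N by simp
qed

lemma others_budget_x_star:
  assumes "i < n"
  shows "budget n m (others_mean n (x_star n \<alpha> m) i) = real n * (1 + m - xbar_star n \<alpha> m) / (real n - \<alpha> i)"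
proof -
  define D where "D = 1 + m - xbar_star n \<alpha> m"
  have N: "2 \<le> real n"
    using n by simp
  have N1: "real n - 1 \<noteq> 0"
    using N by simp
  have Na: "0 < real n - \<alpha> i"
    using n \<alpha> assms by force
  have "(\<Sum>j<n. x_star n \<alpha> m j) = real n * xbar_star n \<alpha> m"
    using avg_x_star N unfolding avg_def by (simp add: divide_eq_eq)
  moreover have "(real n - 1) * budget n m (others_mean n (x_star n \<alpha> m) i)
      = (real n - 1) + real n * m - (real n - 1) * others_mean n (x_star n \<alpha> m) i"
    using N1 unfolding budget_def by (simp add: distrib_left right_diff_distrib)
  ultimately have "(real n - 1) * budget n m (others_mean n (x_star n \<alpha> m) i)
      = real n * D - (1 - x_star n \<alpha> m i)"
    unfolding others_mean_mult[OF n] D_def by (simp add: algebra_simps)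
  also have "\<dots> = (real n - 1) * (real n * D / (real n - \<alpha> i))"
    unfolding x_star_eq[OF assms] D_def[symmetric] using Na by (simp add: field_simps)
  finally show ?thesis
    by (simp only: mult_left_cancel[OF N1] D_def)
qed

lemma x_star_pos_iff:
  assumes "i < n"
  shows "0 < x_star n \<alpha> m i \<longleftrightarrow>
    real n * (m - xbar_star n \<alpha> m) < (real n - 1) * \<alpha> i / (1 - \<alpha> i)"
proof -
  have a: "0 < \<alpha> i" "\<alpha> i < 1" and Na: "0 < real n - \<alpha> i"
    using n \<alpha> assms by force+
  have "0 < x_star n \<alpha> m i \<longleftrightarrow> (1 - \<alpha> i) * (real n * (1 + m - xbar_star n \<alpha> m)) < real n - \<alpha> i"
    unfolding x_star_eq[OF assms] using Na by (simp add: divide_less_eq mult.assoc)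
  also have "\<dots> \<longleftrightarrow> real n * (m - xbar_star n \<alpha> m) * (1 - \<alpha> i) < (real n - 1) * \<alpha> i"
    by (simp add: algebra_simps)
  also have "\<dots> \<longleftrightarrow> real n * (m - xbar_star n \<alpha> m) < (real n - 1) * \<alpha> i / (1 - \<alpha> i)"
    using a by (simp add: less_divide_eq)
  finally show ?thesis .
qed

lemma others_mean_le_J_iff:
  assumes "i < n"
  shows "others_mean n (x_star n \<alpha> m) i \<le> J n m (\<alpha> i) \<longleftrightarrow>
    (real n - \<alpha> i) * (real n * m / (real n - 1) - J n m (\<alpha> i)) - \<alpha> i \<le> real n * (m - xbar_star n \<alpha> m)"
proof -
  define R where "R = (real n / (real n - 1)) powr \<alpha> i"
  have a: "0 < \<alpha> i" "\<alpha> i < 1" and Na: "0 < real n - \<alpha> i"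
    using n \<alpha> assms by force+
  have J: "J n m (\<alpha> i) = 1 + real n * m / (real n - 1) - R"
    unfolding R_def using J_eq[OF n a] .
  have "others_mean n (x_star n \<alpha> m) i \<le> J n m (\<alpha> i) \<longleftrightarrow>
      R \<le> real n * (1 + m - xbar_star n \<alpha> m) / (real n - \<alpha> i)"
    using others_budget_x_star[OF assms] unfolding J budget_def by linarith
  also have "\<dots> \<longleftrightarrow> (real n - \<alpha> i) * R \<le> real n * (1 + m - xbar_star n \<alpha> m)"
    using Na by (simp add: le_divide_eq mult.commute)
  also have "\<dots> \<longleftrightarrow> (real n - \<alpha> i) * (real n * m / (real n - 1) - J n m (\<alpha> i)) - \<alpha> i
      \<le> real n * (m - xbar_star n \<alpha> m)"
    unfolding J by (simp add: algebra_simps)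
  finally show ?thesis .
qed

lemma curved_interior_NE_x_star_iff:
  "curved_interior_NE n \<alpha> m (x_star n \<alpha> m) \<longleftrightarrow> xbar_star n \<alpha> m < m
    \<and> (\<forall>i<n. 0 < x_star n \<alpha> m i) \<and> (\<forall>i<n. others_mean n (x_star n \<alpha> m) i \<le> J n m (\<alpha> i))"
proof -
  define x where "x = x_star n \<alpha> m"
  have N: "2 \<le> real n"
    using n by simp
  have budget_pos: "0 < budget n m (others_mean n x i)"
    and below_one: "x i < 1"
    if "xbar_star n \<alpha> m < m" "i < n" for i
  proof -
    have "0 < \<alpha> i" "\<alpha> i < 1" "0 < real n - \<alpha> i"
      using n \<alpha> that by force+
    moreover have "0 < real n * (1 + m - xbar_star n \<alpha> m)"
      using that N by simp
    ultimately show "0 < budget n m (others_mean n x i)" "x i < 1"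
      unfolding x_def others_budget_x_star[OF that(2)] x_star_eq[OF that(2)] by simp_all
  qed
  have reply: "(\<forall>y. 0 \<le> y \<longrightarrow> y \<le> 1 \<longrightarrow> payoff n \<alpha> m (x(i := y)) i \<le> payoff n \<alpha> m x i)
      \<longleftrightarrow> others_mean n x i \<le> J n m (\<alpha> i)"
    if curved: "xbar_star n \<alpha> m < m" and i: "i < n" for i
  proof -
    have a: "0 < \<alpha> i" "\<alpha> i < 1"
      using \<alpha> i by auto
    have "1 - x i = (1 - \<alpha> i) * budget n m (others_mean n x i)"
      unfolding x_def others_budget_x_star[OF i] x_star_eq[OF i] by simp
    moreover have "((real n - 1) * others_mean n x i + x i) / real n \<le> m"
      using curved avg_x_star N unfolding x_def avg_def others_mean_def by simp
    ultimately have "(\<forall>y. 0 \<le> y \<longrightarrow> y \<le> 1 \<longrightarrow>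
        reply_payoff n m (\<alpha> i) (others_mean n x i) y \<le> reply_payoff n m (\<alpha> i) (others_mean n x i) (x i))
      \<longleftrightarrow> others_mean n x i \<le> J n m (\<alpha> i)"
      by (intro best_reply_iff n a budget_pos curved i)
    moreover have "payoff n \<alpha> m x i = payoff n \<alpha> m (x(i := x i)) i"
      by simp
    ultimately show ?thesis
      unfolding payoff_fun_upd[OF n i] by presburger
  qed
  have avg: "avg n x = xbar_star n \<alpha> m"
    unfolding x_def by (rule avg_x_star)
  show ?thesis
    unfolding x_def[symmetric] curved_interior_NE_def pure_NE_def avg
    using reply below_one by (auto simp: less_imp_le)
qed

lemma x_star_all_pos_iff:
  "(\<forall>i<n. 0 < x_star n \<alpha> m i) \<longleftrightarrow>
    real n * (m - xbar_star n \<alpha> m) < (real n - 1) * Min (\<alpha> ` {..<n}) / (1 - Min (\<alpha> ` {..<n}))"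
proof -
  have "\<alpha> ` {..<n} \<noteq> {}"
    using n by (simp add: lessThan_empty_iff)
  then obtain k where k: "k < n" "\<alpha> k = Min (\<alpha> ` {..<n})"
    by (metis Min_in finite_imageI finite_lessThan imageE lessThan_iff)
  have mono: "(real n - 1) * \<alpha> k / (1 - \<alpha> k) \<le> (real n - 1) * \<alpha> i / (1 - \<alpha> i)" if "i < n" for i
  proof (rule frac_le)
    show "(real n - 1) * \<alpha> k \<le> (real n - 1) * \<alpha> i" and "1 - \<alpha> i \<le> 1 - \<alpha> k"
      using k that n by auto
  qed (use \<alpha> that in auto)
  show ?thesis
  proof
    assume "\<forall>i<n. 0 < x_star n \<alpha> m i"
    then show "real n * (m - xbar_star n \<alpha> m) < (real n - 1) * Min (\<alpha> ` {..<n}) / (1 - Min (\<alpha> ` {..<n}))"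
      using x_star_pos_iff[OF k(1)] k by simp
  next
    assume less_Min: "real n * (m - xbar_star n \<alpha> m) < (real n - 1) * Min (\<alpha> ` {..<n}) / (1 - Min (\<alpha> ` {..<n}))"
    show "\<forall>i<n. 0 < x_star n \<alpha> m i"
      using x_star_pos_iff mono less_Min unfolding k(2) by (meson less_le_trans)
  qed
qed

lemma x_star_all_le_J_iff:
  "(\<forall>i<n. others_mean n (x_star n \<alpha> m) i \<le> J n m (\<alpha> i)) \<longleftrightarrow>
    Max ((\<lambda>i. (real n - \<alpha> i) * (real n * m / (real n - 1) - J n m (\<alpha> i)) - \<alpha> i) ` {..<n})
      \<le> real n * (m - xbar_star n \<alpha> m)"
  using n by (auto simp: others_mean_le_J_iff lessThan_empty_iff)

end

theorem mainTheorem12: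
  fixes n :: nat and \<alpha> :: "nat \<Rightarrow> real" and m :: real
  assumes "n \<ge> 2"
    and "\<forall>i<n. 0 < \<alpha> i \<and> \<alpha> i < 1"
    and "0 < m" and "m < 1"
  shows "curved_interior_NE n \<alpha> m (x_star n \<alpha> m) \<longleftrightarrow>
    (Max ((\<lambda>i. (real n - \<alpha> i) * (real n * m / (real n - 1) - J n m (\<alpha> i)) - \<alpha> i) ` {..<n})
        \<le> real n * (m - xbar_star n \<alpha> m)
     \<and> real n * (m - xbar_star n \<alpha> m)
        < (real n - 1) * Min (\<alpha> ` {..<n}) / (1 - Min (\<alpha> ` {..<n})))"
proof -
  let ?T = "\<lambda>i. (real n - \<alpha> i) * (real n * m / (real n - 1) - J n m (\<alpha> i)) - \<alpha> i"
  have "0 < ?T 0"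
    using assms(1,2) by (intro J_threshold_pos) auto
  also have "\<dots> \<le> Max (?T ` {..<n})"
    using assms(1) by (intro Max_ge) auto
  finally have Max_pos: "0 < Max (?T ` {..<n})" .
  have "xbar_star n \<alpha> m < m" if "Max (?T ` {..<n}) \<le> real n * (m - xbar_star n \<alpha> m)"
  proof -
    have "0 < real n * (m - xbar_star n \<alpha> m)"
      using Max_pos that by linarith
    then show ?thesis
      by (simp add: zero_less_mult_iff)
  qed
  then show ?thesis
    unfolding curved_interior_NE_x_star_iff[OF assms(1,2)] x_star_all_pos_iff[OF assms(1,2)]
      x_star_all_le_J_iff[OF assms(1,2)]
    by blast
qed

end
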